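(* Let $1\le k\le n$ be integers, $\boldsymbol c\in\mathbb{R}^n$, $\theta\in[0,1)$, $\lambda\ge 2$, and $\boldsymbol E\in\mathbb{R}^{n\times d}$ with unit-norm rows satisfying $\boldsymbol e_i^{\mathsf T}\boldsymbol e_j>-1$ for all $i\ne j$. Let $f(\boldsymbol x)=\theta(k-1)\boldsymbol c^{\mathsf T}\boldsymbol x+(1-\theta)\boldsymbol x^{\mathsf T}(\lambda\boldsymbol I-\boldsymbol E\boldsymbol E^{\mathsf T})\boldsymbol x$ and $P=\{\boldsymbol x\in[0,1]^n:\boldsymbol 1^{\mathsf T}\boldsymbol x=k\}$. Consider the Frank--Wolfe iteration with exact line search: given $\boldsymbol x^{(t)}\in P$, let $\boldsymbol s^{(t)}\in\{0,1\}^n$ be the indicator vector of the $k$ largest entries of $\nabla f(\boldsymbol x^{(t)})$, $\boldsymbol d^{(t)}=\boldsymbol s^{(t)}-\boldsymbol x^{(t)}$, $\gamma^{(t)}\in\arg\max_{\gamma\in[0,1]}f(\boldsymbol x^{(t)}+\gamma\boldsymbol d^{(t)})$, and $\boldsymbol x^{(t+1)}=\boldsymbol x^{(t)}+\gamma^{(t)}\boldsymbol d^{(t)}$. Let $\boldsymbol x^\ast\in\{0,1\}^n\cap P$ be an integral local maximizer of $f$ on $P$. Then there exists a neighborhood $\mathcal N(\boldsymbol x^\ast)$ of $\boldsymbol x^\ast$ such that, whenever an iterate $\boldsymbol x^{(t)}\in P\cap\mathcal N(\boldsymbol x^\ast)$ with $\boldsymbol x^{(t)}\ne\boldsymbol x^\ast$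 occurs, the top-$k$ indicator $\boldsymbol s^{(t)}$ is uniquely determined and equals $\boldsymbol x^\ast$, the exact line search returns $\gamma^{(t)}=1$ (uniquely), and hence $\boldsymbol x^{(t+1)}=\boldsymbol x^\ast$.
   Context: A local maximizer of $f$ on $P$ is a point $\boldsymbol x^\ast\in P$ with $f(\boldsymbol x)\le f(\boldsymbol x^\ast)$ for all $\boldsymbol x\in P$ near $\boldsymbol x^\ast$. The exact line search maximizes the one-dimensional quadratic $\gamma\mapsto f(\boldsymbol x^{(t)}+\gamma\boldsymbol d^{(t)})$ over $[0,1]$. *)

theory Defs
  imports "HOL-Analysis.Analysis"
begin

definition fw_obj :: "nat \<Rightarrow> real \<Rightarrow> real \<Rightarrow> real^'n \<Rightarrow> real^'d^'n \<Rightarrow> real^'n \<Rightarrow> real" where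
  "fw_obj k theta lam c E x =
     theta * (real k - 1) * (c \<bullet> x) + (1 - theta) * (x \<bullet> ((mat lam - E ** transpose E) *v x))"

definition fw_P :: "nat \<Rightarrow> (real^'n) set" where
  "fw_P k = {x. (\<forall>i. 0 \<le> x $ i \<and> x $ i \<le> 1) \<and> (\<Sum>i\<in>UNIV. x $ i) = real k}"

definition grad :: "(real^'n \<Rightarrow> real) \<Rightarrow> real^'n \<Rightarrow> real^'n" where
  "grad f x = (THE g. GDERIV f x :> g)"

definition is_topk_indicator :: "nat \<Rightarrow> real^'n \<Rightarrow> real^'n \<Rightarrow> bool" where
  "is_topk_indicator k g s \<longleftrightarrow>
     (\<forall>i. s $ i = 0 \<or> s $ i = 1) \<and> (\<Sum>i\<in>UNIV. s $ i) = real k \<and>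
     (\<forall>i j. s $ i = 1 \<and> s $ j = 0 \<longrightarrow> g $ j \<le> g $ i)"

definition line_search_argmax :: "(real^'n \<Rightarrow> real) \<Rightarrow> real^'n \<Rightarrow> real^'n \<Rightarrow> real set" where
  "line_search_argmax f x d =
     {\<gamma> \<in> {0..1}. \<forall>\<gamma>'\<in>{0..1}. f (x + \<gamma>' *\<^sub>R d) \<le> f (x + \<gamma> *\<^sub>R d)}"

definition local_maximizer_on :: "(real^'n \<Rightarrow> real) \<Rightarrow> (real^'n) set \<Rightarrow> real^'n \<Rightarrow> bool" where
  "local_maximizer_on f P xs \<longleftrightarrow>
     xs \<in> P \<and> (\<exists>e>0. \<forall>x\<in>P. dist x xs < e \<longrightarrow> f x \<le> f xs)"

end

theory Submission
  imports Defs
begin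

text \<open>
  The objective is a quadratic whose curvature along every exchange direction e_j - e_i is
  (1 - theta) (2 (lam - 1) + 2 e_i . e_j) > 0. At the local maximizer xs, moving mass from
  a coordinate i in the support of xs to a coordinate j outside it is feasible, so the
  positive curvature forces the gradient to be strictly smaller at j than at i: the support
  of xs is a strict top-k set of the gradient at xs. A threshold separating the two groups
  of gradient entries keeps separating them on a ball around xs by continuity, so on that
  ball xs is the unique top-k indicator, and the gradient has positive inner product with
  xs - x for every feasible x. Since for a quadratic
  2 (f xs - f y) = (grad f xs + grad f y) . (xs - y), the objective increases strictly
  along the whole segment from x to xs, so the exact line search returns 1.
\<close>

definition quadratic :: "real^'n \<Rightarrow> real^'n^'n \<Rightarrow> real^'n \<Rightarrow> real" where
  "quadratic c A y = c \<bullet> y + y \<bullet> (A *v y)"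

definition quadratic_grad :: "real^'n \<Rightarrow> real^'n^'n \<Rightarrow> real^'n \<Rightarrow> real^'n" where
  "quadratic_grad c A y = c + (A + transpose A) *v y"

lemma quadratic_add:
  "quadratic c A (y + u) = quadratic c A y + quadratic_grad c A y \<bullet> u + u \<bullet> (A *v u)"
  unfolding quadratic_def quadratic_grad_def
  by (simp add: matrix_vector_right_distrib matrix_vector_mult_add_rdistrib inner_add_left
      inner_add_right vector_transpose_matrix dot_lmul_matrix inner_commute[of u "A *v y"])

lemma quadratic_diff:
  "2 * (quadratic c A x - quadratic c A y) =
     (quadratic_grad c A x + quadratic_grad c A y) \<bullet> (x - y)"
proof -
  have "(y - x) \<bullet> (A *v (y - x)) = (x - y) \<bullet> (A *v (x - y))"
    by (simp add: matrix_vector_mult_diff_distrib inner_diff_left inner_diff_right algebra_simps)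
  then show ?thesis
    using quadratic_add[of c A y "x - y"] quadratic_add[of c A x "y - x"]
    by (simp add: inner_add_left inner_diff_right algebra_simps)
qed

lemma has_derivative_quadratic:
  "(quadratic c A has_derivative (\<lambda>h. h \<bullet> quadratic_grad c A y)) (at y)"
proof -
  have "(quadratic c A has_derivative (\<lambda>h. c \<bullet> h + (h \<bullet> (A *v y) + y \<bullet> (A *v h)))) (at y)"
    unfolding quadratic_def
    using bounded_linear_imp_has_derivative[OF matrix_vector_mul_bounded_linear[of A]]
    by (intro derivative_eq_intros) auto
  moreover have "c \<bullet> h + (h \<bullet> (A *v y) + y \<bullet> (A *v h)) = h \<bullet> quadratic_grad c A y" for h
    unfolding quadratic_grad_def
    by (simp add: matrix_vector_mult_add_rdistrib inner_add_right vector_transpose_matrix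
        inner_commute dot_lmul_matrix[of y A h, symmetric])
  ultimately show ?thesis by simp
qed

lemma grad_quadratic: "grad (quadratic c A) y = quadratic_grad c A y"
  unfolding grad_def
proof (rule the_equality)
  show "GDERIV (quadratic c A) y :> quadratic_grad c A y"
    unfolding gderiv_def by (rule has_derivative_quadratic)
next
  fix g assume "GDERIV (quadratic c A) y :> g"
  then have "(\<lambda>h. h \<bullet> g) = (\<lambda>h. h \<bullet> quadratic_grad c A y)"
    using has_derivative_unique has_derivative_quadratic unfolding gderiv_def by blast
  then show "g = quadratic_grad c A y"
    by (metis vector_eq_ldot)
qed

lemma continuous_on_quadratic_grad: "continuous_on UNIV (quadratic_grad c A)"
  unfolding quadratic_grad_def
  by (intro continuous_intros linear_continuous_on matrix_vector_mul_bounded_linear)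

lemma quadratic_local_max_descent:
  assumes "local_maximizer_on (quadratic c A) P x"
    and "\<And>t. 0 \<le> t \<Longrightarrow> t \<le> 1 \<Longrightarrow> x + t *\<^sub>R d \<in> P"
    and "0 < d \<bullet> (A *v d)"
  shows "quadratic_grad c A x \<bullet> d < 0"
proof -
  obtain e where e: "0 < e" "\<And>y. y \<in> P \<Longrightarrow> dist y x < e \<Longrightarrow> quadratic c A y \<le> quadratic c A x"
    using assms(1) unfolding local_maximizer_on_def by blast
  have "d \<noteq> 0" using assms(3) by auto
  define t where "t = min 1 (e / (2 * norm d))"
  have t: "0 < t" "t \<le> 1" using e(1) \<open>d \<noteq> 0\<close> by (auto simp: t_def)
  have "t * norm d \<le> e / (2 * norm d) * norm d"
    unfolding t_def by (intro mult_right_mono) auto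
  also have "\<dots> < e" using e(1) \<open>d \<noteq> 0\<close> by simp
  finally have "quadratic c A (x + t *\<^sub>R d) \<le> quadratic c A x"
    using e(2) assms(2) t by (simp add: dist_norm)
  then have "t * (quadratic_grad c A x \<bullet> d) + t * t * (d \<bullet> (A *v d)) \<le> 0"
    using quadratic_add[of c A x "t *\<^sub>R d"] by (simp add: matrix_vector_mult_scaleR)
  moreover have "0 < t * t * (d \<bullet> (A *v d))" using t assms(3) by simp
  ultimately have "t * (quadratic_grad c A x \<bullet> d) < 0" by linarith
  then show ?thesis using t(1) by (simp add: mult_less_0_iff)
qed

lemma line_search_argmax_eq_1:
  assumes "\<And>\<gamma>. 0 \<le> \<gamma> \<Longrightarrow> \<gamma> < 1 \<Longrightarrow> f (x + \<gamma> *\<^sub>R d) < f (x + d)"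
  shows "line_search_argmax f x d = {1}"
proof -
  have "f (x + \<gamma> *\<^sub>R d) \<le> f (x + 1 *\<^sub>R d)" if "\<gamma> \<in> {0..1}" for \<gamma>
  proof (cases "\<gamma> = 1")
    case False
    with that have "0 \<le> \<gamma>" "\<gamma> < 1" by auto
    then show ?thesis using assms[of \<gamma>] by simp
  qed simp
  then have "1 \<in> line_search_argmax f x d"
    unfolding line_search_argmax_def by simp
  moreover have "\<gamma> = 1" if "\<gamma> \<in> line_search_argmax f x d" for \<gamma>
  proof (rule ccontr)
    assume "\<gamma> \<noteq> 1"
    from that have "\<gamma> \<in> {0..1}" and max: "\<forall>\<gamma>'\<in>{0..1}. f (x + \<gamma>' *\<^sub>R d) \<le> f (x + \<gamma> *\<^sub>R d)"
      unfolding line_search_argmax_def by auto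
    have "f (x + d) \<le> f (x + \<gamma> *\<^sub>R d)" using max[rule_format, of 1] by simp
    moreover have "0 \<le> \<gamma>" "\<gamma> < 1" using \<open>\<gamma> \<in> {0..1}\<close> \<open>\<gamma> \<noteq> 1\<close> by auto
    then have "f (x + \<gamma> *\<^sub>R d) < f (x + d)" by (rule assms)
    ultimately show False by simp
  qed
  ultimately show ?thesis by blast
qed

lemma quadratic_line_search_argmax_eq_1:
  assumes "convex U" "x \<in> U" "z \<in> U"
    and "\<And>y. y \<in> U \<Longrightarrow> 0 < quadratic_grad c A y \<bullet> (z - x)"
  shows "line_search_argmax (quadratic c A) x (z - x) = {1}"
proof (rule line_search_argmax_eq_1)
  fix \<gamma> :: real assume \<gamma>: "0 \<le> \<gamma>" "\<gamma> < 1"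
  define y where "y = x + \<gamma> *\<^sub>R (z - x)"
  have "y = (1 - \<gamma>) *\<^sub>R x + \<gamma> *\<^sub>R z" by (simp add: y_def algebra_simps)
  then have "y \<in> U" using convexD[OF assms(1-3)] \<gamma> by simp
  have "z - y = (1 - \<gamma>) *\<^sub>R (z - x)" by (simp add: y_def algebra_simps)
  have "2 * (quadratic c A z - quadratic c A y) =
      (quadratic_grad c A z + quadratic_grad c A y) \<bullet> (z - y)"
    by (rule quadratic_diff)
  also have "\<dots> = (1 - \<gamma>) * (quadratic_grad c A z \<bullet> (z - x) + quadratic_grad c A y \<bullet> (z - x))"
    using \<open>z - y = (1 - \<gamma>) *\<^sub>R (z - x)\<close> by (simp add: inner_add_left distrib_left)
  also have "\<dots> > 0" using \<gamma> assms(3,4) \<open>y \<in> U\<close> by (intro mult_pos_pos add_pos_pos) auto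
  finally show "quadratic c A (x + \<gamma> *\<^sub>R (z - x)) < quadratic c A (x + (z - x))"
    by (simp add: y_def)
qed

lemma sum_eq_0_obtains_pos:
  fixes d :: "'a \<Rightarrow> real"
  assumes "finite A" "sum d A = 0" "i \<in> A" "d i \<noteq> 0"
  obtains j where "j \<in> A" "0 < d j"
proof (rule ccontr)
  assume "\<not> thesis"
  with that have nonpos: "d j \<le> 0" if "j \<in> A" for j
    using \<open>j \<in> A\<close> not_less by blast
  have "0 < sum (\<lambda>j. - d j) A"
  proof (rule sum_pos2[OF assms(1,3)])
    show "0 < - d i" using nonpos[OF assms(3)] assms(4) by linarith
    show "0 \<le> - d j" if "j \<in> A" for j using nonpos[OF that] by linarith
  qed
  then show False using assms(2) by (simp add: sum_negf)
qed

lemma indicator_vectors_exchange: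
  fixes s t :: "real^'n"
  assumes s01: "\<forall>i. s $ i = 0 \<or> s $ i = 1" and t01: "\<forall>i. t $ i = 0 \<or> t $ i = 1"
    and "(\<Sum>i\<in>UNIV. s $ i) = (\<Sum>i\<in>UNIV. t $ i)" and "s \<noteq> t"
  obtains i j where "s $ i = 1" "t $ i = 0" "s $ j = 0" "t $ j = 1"
proof -
  obtain l where l: "s $ l \<noteq> t $ l" using assms(4) by (auto simp: vec_eq_iff)
  have "(\<Sum>i\<in>UNIV. s $ i - t $ i) = 0" "(\<Sum>i\<in>UNIV. t $ i - s $ i) = 0"
    using assms(3) by (simp_all add: sum_subtractf)
  moreover have "s $ l - t $ l \<noteq> 0" "t $ l - s $ l \<noteq> 0" using l by simp_all
  ultimately obtain i j where "0 < s $ i - t $ i" "0 < t $ j - s $ j"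
    using sum_eq_0_obtains_pos[OF finite _ UNIV_I] by meson
  moreover have "s $ i = 1" "t $ i = 0" "s $ j = 0" "t $ j = 1"
    using calculation s01[rule_format, of i] t01[rule_format, of i]
      s01[rule_format, of j] t01[rule_format, of j] by auto
  then show thesis by (rule that)
qed

lemma is_topk_indicator_iff_strict_gap:
  fixes g xs :: "real^'n"
  assumes "\<forall>i. xs $ i = 0 \<or> xs $ i = 1" "(\<Sum>i\<in>UNIV. xs $ i) = real k"
    and "\<And>i j. xs $ i = 1 \<Longrightarrow> xs $ j = 0 \<Longrightarrow> g $ j < g $ i"
  shows "is_topk_indicator k g s \<longleftrightarrow> s = xs"
proof
  assume s: "is_topk_indicator k g s"
  show "s = xs"
  proof (rule ccontr)
    assume "s \<noteq> xs"
    moreover have "\<forall>i. s $ i = 0 \<or> s $ i = 1" "(\<Sum>i\<in>UNIV. s $ i) = (\<Sum>i\<in>UNIV. xs $ i)"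
      using s assms(2) unfolding is_topk_indicator_def by auto
    ultimately obtain i j where ij: "s $ i = 1" "xs $ i = 0" "s $ j = 0" "xs $ j = 1"
      using indicator_vectors_exchange[of s xs] assms(1) by blast
    then have "g $ j \<le> g $ i" using s unfolding is_topk_indicator_def by blast
    moreover have "g $ i < g $ j" by (rule assms(3)[OF ij(4,2)])
    ultimately show False by simp
  qed
next
  assume "s = xs"
  then show "is_topk_indicator k g s"
    using assms unfolding is_topk_indicator_def by (auto intro: less_imp_le)
qed

lemma inner_pos_of_sign_pattern:
  fixes g d :: "real^'n"
  assumes "(\<Sum>i\<in>UNIV. d $ i) = 0" "d \<noteq> 0"
    and "\<And>i. g $ i \<noteq> \<tau>" "\<And>i. 0 \<le> (g $ i - \<tau>) * d $ i"
  shows "0 < g \<bullet> d"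
proof -
  obtain l where "d $ l \<noteq> 0" using assms(2) by (auto simp: vec_eq_iff)
  then have "0 < (g $ l - \<tau>) * d $ l"
    using assms(3,4)[of l] by (simp add: order_less_le)
  then have "0 < (\<Sum>i\<in>UNIV. (g $ i - \<tau>) * d $ i)"
    using assms(4) by (intro sum_pos2[of UNIV l]) auto
  also have "\<dots> = g \<bullet> d - \<tau> * (\<Sum>i\<in>UNIV. d $ i)"
    by (simp add: inner_vec_def sum_distrib_left sum_subtractf left_diff_distrib)
  finally show ?thesis using assms(1) by simp
qed

lemma strict_gap_threshold:
  fixes g :: "real^'n"
  assumes "\<And>i j. i \<in> S \<Longrightarrow> j \<notin> S \<Longrightarrow> g $ j < g $ i"
  obtains \<tau> where "\<And>i. i \<in> S \<Longrightarrow> \<tau> < g $ i" "\<And>i. i \<notin> S \<Longrightarrow> g $ i < \<tau>"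
proof -
  \<comment> \<open>The sentinels Min R - 1 and Max R + 1 keep both sets nonempty, covering S = {} and S = UNIV.\<close>
  define R where "R = range (($) g)"
  define lo where "lo = Max (insert (Min R - 1) (($) g ` (- S)))"
  define hi where "hi = Min (insert (Max R + 1) (($) g ` S))"
  have range: "Min R \<le> g $ i" "g $ i \<le> Max R" for i
    unfolding R_def by simp_all
  have "Min R \<le> Max R"
    unfolding R_def by (intro Max_ge Min_in) auto
  then have "Min R - 1 < Max R + 1" by linarith
  moreover have "Min R - 1 < g $ i" "g $ i < Max R + 1" for i
    using range[of i] by linarith+
  ultimately have "a < b" if "a \<in> insert (Min R - 1) (($) g ` (- S))"
    and "b \<in> insert (Max R + 1) (($) g ` S)" for a b
    using that assms by auto
  then have "lo < hi" unfolding lo_def hi_def by (simp add: Max_in Min_in)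
  have lo_ge: "g $ i \<le> lo" if "i \<notin> S" for i
    using that unfolding lo_def by (intro Max_ge) auto
  have hi_le: "hi \<le> g $ i" if "i \<in> S" for i
    using that unfolding hi_def by (intro Min_le) auto
  show thesis
  proof (rule that)
    show "(lo + hi) / 2 < g $ i" if "i \<in> S" for i
      using \<open>lo < hi\<close> hi_le[OF that] by (simp add: field_simps)
    show "g $ i < (lo + hi) / 2" if "i \<notin> S" for i
      using \<open>lo < hi\<close> lo_ge[OF that] by (simp add: field_simps)
  qed
qed

lemma continuous_threshold_ball:
  fixes g :: "'a::metric_space \<Rightarrow> real^'n"
  assumes "continuous_on UNIV g"
    and "\<And>i. i \<in> S \<Longrightarrow> \<tau> < g x0 $ i" "\<And>i. i \<notin> S \<Longrightarrow> g x0 $ i < \<tau>"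
  obtains r where "0 < r"
    "\<And>y i. y \<in> ball x0 r \<Longrightarrow> i \<in> S \<Longrightarrow> \<tau> < g y $ i"
    "\<And>y i. y \<in> ball x0 r \<Longrightarrow> i \<notin> S \<Longrightarrow> g y $ i < \<tau>"
proof -
  define U where "U = (\<Inter>i\<in>S. {y. \<tau> < g y $ i}) \<inter> (\<Inter>i\<in>- S. {y. g y $ i < \<tau>})"
  have "continuous_on UNIV (\<lambda>y. g y $ i)" for i
    using assms(1) by (rule continuous_on_component)
  then have "open U"
    unfolding U_def by (auto intro!: open_Int open_INT open_Collect_less continuous_on_const)
  moreover have "x0 \<in> U" using assms(2,3) unfolding U_def by auto
  ultimately obtain r where "0 < r" "ball x0 r \<subseteq> U" using open_contains_ball by blast
  then show thesis by (intro that) (auto simp: U_def)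
qed

lemma inner_pos_toward_vertex:
  fixes g xs x :: "real^'n"
  assumes "\<forall>i. xs $ i = 0 \<or> xs $ i = 1" "xs \<in> fw_P k" "x \<in> fw_P k" "x \<noteq> xs"
    and "\<And>i. xs $ i = 1 \<Longrightarrow> \<tau> < g $ i" "\<And>i. xs $ i = 0 \<Longrightarrow> g $ i < \<tau>"
  shows "0 < g \<bullet> (xs - x)"
proof (rule inner_pos_of_sign_pattern)
  show "(\<Sum>i\<in>UNIV. (xs - x) $ i) = 0"
    using assms(2,3) by (simp add: fw_P_def sum_subtractf)
  show "xs - x \<noteq> 0" using assms(4) by simp
  show "g $ i \<noteq> \<tau>" for i
    using assms(1,5,6) by (metis less_irrefl)
  show "0 \<le> (g $ i - \<tau>) * (xs - x) $ i" for i
    using assms(1)[rule_format, of i] assms(5,6)[of i] assms(3) unfolding fw_P_def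
    by (auto intro!: mult_nonpos_nonneg)
qed

lemma axis_exchange_in_fw_P:
  assumes "xs \<in> fw_P k" "xs $ i = 1" "xs $ j = 0" "0 \<le> t" "t \<le> 1"
  shows "xs + t *\<^sub>R (axis j 1 - axis i 1) \<in> fw_P k"
proof -
  have "i \<noteq> j" using assms(2,3) by auto
  then have "(xs + t *\<^sub>R (axis j 1 - axis i 1)) $ l =
      (if l = j then t else if l = i then 1 - t else xs $ l)" for l
    using assms(2,3) by (auto simp: axis_def)
  moreover have "(\<Sum>l\<in>UNIV. (xs + t *\<^sub>R (axis j 1 - axis i 1)) $ l) = (\<Sum>l\<in>UNIV. xs $ l)"
    by (simp add: sum.distrib sum_subtractf flip: sum_distrib_left) (simp add: axis_def)
  ultimately show ?thesis using assms unfolding fw_P_def by auto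
qed

lemma quadratic_frank_wolfe_step_to_vertex:
  fixes xs :: "real^'n"
  assumes xs01: "\<forall>i. xs $ i = 0 \<or> xs $ i = 1" and xsP: "xs \<in> fw_P k"
    and gap: "\<And>i j. xs $ i = 1 \<Longrightarrow> xs $ j = 0 \<Longrightarrow>
      quadratic_grad c A xs $ j < quadratic_grad c A xs $ i"
  obtains r where "0 < r"
    "\<And>x s. x \<in> ball xs r \<Longrightarrow> is_topk_indicator k (quadratic_grad c A x) s \<longleftrightarrow> s = xs"
    "\<And>x. x \<in> fw_P k \<Longrightarrow> x \<in> ball xs r \<Longrightarrow> x \<noteq> xs \<Longrightarrow>
      line_search_argmax (quadratic c A) x (xs - x) = {1}"
proof -
  define S where "S = {i. xs $ i = 1}"
  have notS: "i \<notin> S \<longleftrightarrow> xs $ i = 0" for i using xs01 by (auto simp: S_def)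
  have gap_S: "\<And>i j. i \<in> S \<Longrightarrow> j \<notin> S \<Longrightarrow>
      quadratic_grad c A xs $ j < quadratic_grad c A xs $ i"
    using gap notS by (simp add: S_def)
  obtain \<tau> where \<tau>:
    "\<And>i. i \<in> S \<Longrightarrow> \<tau> < quadratic_grad c A xs $ i" "\<And>i. i \<notin> S \<Longrightarrow> quadratic_grad c A xs $ i < \<tau>"
    using strict_gap_threshold[OF gap_S] by blast
  obtain r where r: "0 < r"
    "\<And>y i. y \<in> ball xs r \<Longrightarrow> i \<in> S \<Longrightarrow> \<tau> < quadratic_grad c A y $ i"
    "\<And>y i. y \<in> ball xs r \<Longrightarrow> i \<notin> S \<Longrightarrow> quadratic_grad c A y $ i < \<tau>"
    using continuous_threshold_ball[OF continuous_on_quadratic_grad \<tau>] by blast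
  have above: "\<tau> < quadratic_grad c A y $ i" if "y \<in> ball xs r" "xs $ i = 1" for y i
    using r(2) that by (simp add: S_def)
  have below: "quadratic_grad c A y $ i < \<tau>" if "y \<in> ball xs r" "xs $ i = 0" for y i
    using r(3) that notS by blast
  show thesis
  proof (rule that[OF r(1)])
    fix x s assume "x \<in> ball xs r"
    have "(\<Sum>i\<in>UNIV. xs $ i) = real k" using xsP by (simp add: fw_P_def)
    moreover have "quadratic_grad c A x $ j < quadratic_grad c A x $ i"
      if "xs $ i = 1" "xs $ j = 0" for i j
      using below[OF \<open>x \<in> ball xs r\<close> that(2)] above[OF \<open>x \<in> ball xs r\<close> that(1)]
      by (rule less_trans)
    ultimately show "is_topk_indicator k (quadratic_grad c A x) s \<longleftrightarrow> s = xs"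
      by (rule is_topk_indicator_iff_strict_gap[OF xs01])
  next
    fix x assume "x \<in> fw_P k" "x \<in> ball xs r" "x \<noteq> xs"
    show "line_search_argmax (quadratic c A) x (xs - x) = {1}"
    proof (rule quadratic_line_search_argmax_eq_1[OF convex_ball \<open>x \<in> ball xs r\<close>])
      show "xs \<in> ball xs r" using r(1) by simp
      show "0 < quadratic_grad c A y \<bullet> (xs - x)" if "y \<in> ball xs r" for y
        using above[OF that] below[OF that]
        by (rule inner_pos_toward_vertex[OF xs01 xsP \<open>x \<in> fw_P k\<close> \<open>x \<noteq> xs\<close>])
    qed
  qed
qed

lemma fw_obj_eq_quadratic:
  "fw_obj k theta lam c E =
     quadratic ((theta * (real k - 1)) *\<^sub>R c) ((1 - theta) *\<^sub>R (mat lam - E ** transpose E))"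
  by (simp add: fun_eq_iff fw_obj_def quadratic_def flip: scaleR_matrix_vector_assoc)

lemma inner_axis_diff_mult:
  fixes M :: "real^'n^'n"
  shows "(axis j 1 - axis i 1) \<bullet> (M *v (axis j 1 - axis i 1)) = M$j$j - M$j$i - M$i$j + M$i$i"
  by (simp add: matrix_vector_mult_diff_distrib inner_diff_left inner_diff_right inner_axis'
      matrix_vector_mult_basis column_def)

lemma fw_curvature_pos:
  fixes E :: "real^'d^'n"
  assumes "theta < 1" "2 \<le> lam" "norm (E $ i) = 1" "norm (E $ j) = 1"
    and "i \<noteq> j" "-1 < E $ i \<bullet> E $ j"
  shows "0 < (axis j 1 - axis i 1) \<bullet>
    (((1 - theta) *\<^sub>R (mat lam - E ** transpose E)) *v (axis j 1 - axis i 1))"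
proof -
  define M where "M = (1 - theta) *\<^sub>R (mat lam - E ** transpose E)"
  have entry: "M $ l $ m = (1 - theta) * ((if l = m then lam else 0) - E $ l \<bullet> E $ m)" for l m
    unfolding M_def by (simp add: matrix_matrix_mult_def transpose_def inner_vec_def mat_def)
  have unit: "E $ l \<bullet> E $ l = 1" if "norm (E $ l) = 1" for l
    using that by (simp add: dot_square_norm)
  have "(axis j 1 - axis i 1) \<bullet> (M *v (axis j 1 - axis i 1)) = M$j$j - M$j$i - M$i$j + M$i$i"
    by (rule inner_axis_diff_mult)
  also have "\<dots> = (1 - theta) * (2 * (lam - 1) + 2 * (E $ i \<bullet> E $ j))"
    using assms(5) unit[OF assms(3)] unit[OF assms(4)]
    by (simp add: entry inner_commute[of "E $ j" "E $ i"] algebra_simps)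
  also have "\<dots> > 0" using assms(1,2,6) by simp
  finally show ?thesis unfolding M_def .
qed

theorem theorem4:
  fixes k :: nat and c :: "real^'n" and theta lam :: real
    and E :: "real^'d^'n" and xs :: "real^'n"
  assumes "1 \<le> k" and "k \<le> CARD('n)"
    and "0 \<le> theta" and "theta < 1" and "lam \<ge> 2"
    and "\<And>i. norm (E $ i) = 1"
    and "\<And>i j. i \<noteq> j \<Longrightarrow> (E $ i) \<bullet> (E $ j) > -1"
    and "\<forall>i. xs $ i = 0 \<or> xs $ i = 1"
    and "local_maximizer_on (fw_obj k theta lam c E) (fw_P k) xs"
  shows "\<exists>N. open N \<and> xs \<in> N \<and>
    (\<forall>x \<in> fw_P k \<inter> N. x \<noteq> xs \<longrightarrow>
       {s. is_topk_indicator k (grad (fw_obj k theta lam c E) x) s} = {xs} \<and>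
       line_search_argmax (fw_obj k theta lam c E) x (xs - x) = {1} \<and>
       (\<forall>s \<gamma>. is_topk_indicator k (grad (fw_obj k theta lam c E) x) s \<and>
              \<gamma> \<in> line_search_argmax (fw_obj k theta lam c E) x (s - x) \<longrightarrow>
              x + \<gamma> *\<^sub>R (s - x) = xs))"
proof -
  define A where "A = (1 - theta) *\<^sub>R (mat lam - E ** transpose E)"
  define c' where "c' = (theta * (real k - 1)) *\<^sub>R c"
  have f: "fw_obj k theta lam c E = quadratic c' A"
    unfolding A_def c'_def by (rule fw_obj_eq_quadratic)
  have xsP: "xs \<in> fw_P k" and lmax: "local_maximizer_on (quadratic c' A) (fw_P k) xs"
    using assms(9) f by (auto simp: local_maximizer_on_def)
  have gap: "quadratic_grad c' A xs $ j < quadratic_grad c' A xs $ i"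
    if "xs $ i = 1" "xs $ j = 0" for i j
  proof -
    have "i \<noteq> j" using that by auto
    have "quadratic_grad c' A xs \<bullet> (axis j 1 - axis i 1) < 0"
      using quadratic_local_max_descent[OF lmax axis_exchange_in_fw_P[OF xsP that]]
        fw_curvature_pos[OF assms(4,5,6,6) \<open>i \<noteq> j\<close> assms(7)[OF \<open>i \<noteq> j\<close>]]
      unfolding A_def by blast
    then show ?thesis by (simp add: inner_diff_right inner_axis)
  qed
  obtain r where "0 < r"
    "\<And>x s. x \<in> ball xs r \<Longrightarrow> is_topk_indicator k (quadratic_grad c' A x) s \<longleftrightarrow> s = xs"
    "\<And>x. x \<in> fw_P k \<Longrightarrow> x \<in> ball xs r \<Longrightarrow> x \<noteq> xs \<Longrightarrow>
      line_search_argmax (quadratic c' A) x (xs - x) = {1}"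
    using quadratic_frank_wolfe_step_to_vertex[OF assms(8) xsP gap] by blast
  then show ?thesis
    by (intro exI[of _ "ball xs r"]) (auto simp: f grad_quadratic)
qed

end
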